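(* For $(n,m) \in \mathbb{Z}^2$ let $q_{(n,m)}(x) = x^4 + n x^3 + m x^2 + n x + 1$, and let $Q = \{(n,m) \in \mathbb{Z}^2 : q_{(n,m)} \text{ has no real root}\}$. Then there exists a finite set $\tilde{Q} \subseteq \mathbb{Z}^2$ such that for every $(n,m) \in Q \setminus \tilde{Q}$ one has $n^2 - 4m + 8 \le 0$. *)

theory Defs
  imports Complex_Main
begin

definition q :: "int \<times> int \<Rightarrow> real \<Rightarrow> real" where
  "q nm x = (case nm of (n, m) \<Rightarrow> x ^ 4 + of_int n * x ^ 3 + of_int m * x ^ 2 + of_int n * x + 1)"

definition Q :: "(int \<times> int) set" where
  "Q = {nm. \<not> (\<exists>x::real. q nm x = 0)}"

end

theory Submission
  imports Defs
begin

text \<open>The quartic is palindromic: substituting \<open>y = x + 1/x\<close> turns \<open>q x / x\<^sup>2\<close> into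
  \<open>y\<^sup>2 + n y + m - 2\<close>. A real root \<open>y\<close> of this quadratic with \<open>\<bar>y\<bar> \<ge> 2\<close> yields a real \<open>x\<close>
  with \<open>x + 1/x = y\<close>, hence a real root of \<open>q\<close>. So if \<open>(n, m) \<in> Q\<close> and the discriminant
  \<open>n\<^sup>2 - 4m + 8\<close> is positive, both roots \<open>y\<^sub>1, y\<^sub>2\<close> lie in \<open>(-2, 2)\<close>, and Vieta's formulas
  \<open>n = -(y\<^sub>1 + y\<^sub>2)\<close>, \<open>m - 2 = y\<^sub>1 y\<^sub>2\<close> confine \<open>(n, m)\<close> to a finite box.\<close>

lemma q_palindromic_decomposition:
  "q (n, m) x = (x\<^sup>2 - y * x + 1) * (x\<^sup>2 + (of_int n + y) * x + 1)
                + x\<^sup>2 * (y\<^sup>2 + of_int n * y + of_int m - 2)"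
  unfolding q_def by (simp add: algebra_simps power2_eq_square power3_eq_cube power4_eq_xxxx)

lemma reciprocal_quadratic_has_real_root:
  fixes y :: real
  assumes "2 \<le> \<bar>y\<bar>"
  shows "\<exists>x. x\<^sup>2 - y * x + 1 = 0"
proof
  have "0 \<le> y\<^sup>2 - 4"
    using power_mono[OF assms, of 2] by simp
  then have "(sqrt (y\<^sup>2 - 4))\<^sup>2 = y\<^sup>2 - 4"
    by simp
  then show "((y + sqrt (y\<^sup>2 - 4)) / 2)\<^sup>2 - y * ((y + sqrt (y\<^sup>2 - 4)) / 2) + 1 = 0"
    by (simp add: power2_eq_square field_simps)
qed

lemma Q_quadratic_roots_abs_less_2:
  fixes y :: real
  assumes "(n, m) \<in> Q" and "y\<^sup>2 + of_int n * y + of_int m - 2 = 0"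
  shows "\<bar>y\<bar> < 2"
proof (rule ccontr)
  assume "\<not> \<bar>y\<bar> < 2"
  then obtain x where "x\<^sup>2 - y * x + 1 = 0"
    using reciprocal_quadratic_has_real_root by force
  then have "q (n, m) x = 0"
    using assms(2) by (simp add: q_palindromic_decomposition[of n m x y])
  with assms(1) show False
    unfolding Q_def by blast
qed

lemma Q_bounded_if_discriminant_pos:
  assumes "(n, m) \<in> Q" and "0 < n\<^sup>2 - 4 * m + 8"
  shows "\<bar>n\<bar> \<le> 3 \<and> -1 \<le> m \<and> m \<le> 5"
proof -
  have "0 < real_of_int (n\<^sup>2 - 4 * m + 8)"
    using assms(2) by (simp only: of_int_0_less_iff)
  then have discr_pos: "0 < real_of_int n ^ 2 - 4 * of_int m + 8"
    by simp
  define s where "s = sqrt (real_of_int n ^ 2 - 4 * of_int m + 8)"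
  have s2: "s\<^sup>2 = of_int n ^ 2 - 4 * of_int m + 8"
    using discr_pos unfolding s_def by simp
  define y\<^sub>1 where "y\<^sub>1 = (s - of_int n) / 2"
  define y\<^sub>2 where "y\<^sub>2 = (- s - of_int n) / 2"
  have y\<^sub>1_bound: "\<bar>y\<^sub>1\<bar> < 2"
    using s2 by (intro Q_quadratic_roots_abs_less_2[OF assms(1)])
      (simp add: y\<^sub>1_def power2_eq_square field_simps)
  have y\<^sub>2_bound: "\<bar>y\<^sub>2\<bar> < 2"
    using s2 by (intro Q_quadratic_roots_abs_less_2[OF assms(1)])
      (simp add: y\<^sub>2_def power2_eq_square field_simps)
  have "\<bar>y\<^sub>1 * y\<^sub>2\<bar> < 4"
    using mult_strict_mono[OF y\<^sub>1_bound y\<^sub>2_bound] by (simp add: abs_mult)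
  moreover have "\<bar>y\<^sub>1 + y\<^sub>2\<bar> < 4"
    using y\<^sub>1_bound y\<^sub>2_bound by linarith
  moreover have "of_int n = - (y\<^sub>1 + y\<^sub>2)"
    unfolding y\<^sub>1_def y\<^sub>2_def by (simp add: field_simps)
  moreover have "of_int m - 2 = y\<^sub>1 * y\<^sub>2"
    using s2 unfolding y\<^sub>1_def y\<^sub>2_def by (simp add: power2_eq_square field_simps)
  ultimately have "\<bar>real_of_int n\<bar> < 4" and "-2 < real_of_int m" and "real_of_int m < 6"
    by linarith+
  then show ?thesis
    by linarith
qed

theorem lemmaA1:
  shows "\<exists>Qt :: (int \<times> int) set. finite Qt \<and>
           (\<forall>n m. (n, m) \<in> Q - Qt \<longrightarrow> n ^ 2 - 4 * m + 8 \<le> 0)"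
proof (intro exI conjI allI impI)
  show "finite ({-3..3} \<times> {-1..5} :: (int \<times> int) set)"
    by simp
  fix n m :: int
  assume "(n, m) \<in> Q - {-3..3} \<times> {-1..5}"
  then show "n ^ 2 - 4 * m + 8 \<le> 0"
    using Q_bounded_if_discriminant_pos[of n m] by force
qed

end
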